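(* Let $G$ be a finite group. The following statements are equivalent: (a) $G$ is abelian; (b) $\mathcal B(G)$ is a Krull monoid; (c) $\mathcal B(G)$ is a transfer Krull monoid.
   Context: Let $G$ be a finite group written multiplicatively with identity $1_G$. $\mathcal F(G)$ denotes the free abelian monoid with basis $G$; its elements are sequences $S=g_1\boldsymbol{\cdot}\ldots\boldsymbol{\cdot}g_\ell$ (unordered, repetitions allowed, operation $\boldsymbol{\cdot}$ = concatenation). $\pi(S)=\{g_{\tau(1)}\cdots g_{\tau(\ell)}:\tau\text{ a permutation of }[1,\ell]\}$, $\pi(\text{empty sequence})=\{1_G\}$, and $\mathcal B(G)=\{S\in\mathcal F(G):1_G\in\pi(S)\}$. All monoids are commutative and cancellative. A monoid homomorphism $\varphi:H\to D$ is a divisor homomorphism if $\varphi(a)\mid\varphi(b)$ implies $a\mid b$. A monoid $H$ is a Krull monoid if there is a divisor homomorphism from $H$ into a free abelian monoid. A monoid homomorphism $\theta:H\to B$ is a transfer homomorphism if (T1) $B=\theta(H)B^\times$ and $\theta^{-1}(B^\times)=H^\times$, and (T2) whenever $u\in H$, $b,c\in B$ and $\theta(u)=bc$, there exist $v,w\in H$ with $u=vw$, $\theta(v)B^\times=bB^\times$ and $\theta(w)B^\times=cB^\times$. A monoid $H$ is a transfer Krull monoid if there exists a transfer homomorphism from $H$ to a Krull monoid. *)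

theory Defs
  imports "HOL-Algebra.Group" "HOL-Algebra.Divisibility" "HOL-Library.Multiset"
begin

definition seq_prods :: "('a, 'b) monoid_scheme \<Rightarrow> 'a multiset \<Rightarrow> 'a set" where
  "seq_prods G S = {foldr (\<lambda>x y. x \<otimes>\<^bsub>G\<^esub> y) xs \<one>\<^bsub>G\<^esub> | xs. mset xs = S}"

definition free_ab_monoid :: "'p set \<Rightarrow> 'p multiset monoid" where
  "free_ab_monoid P = \<lparr>carrier = {S. set_mset S \<subseteq> P}, mult = (+), one = {#}\<rparr>"

definition BG :: "('a, 'b) monoid_scheme \<Rightarrow> 'a multiset monoid" where
  "BG G = \<lparr>carrier = {S. set_mset S \<subseteq> carrier G \<and> \<one>\<^bsub>G\<^esub> \<in> seq_prods G S},
           mult = (+), one = {#}\<rparr>"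

definition mon_hom :: "('a, 'm) monoid_scheme \<Rightarrow> ('b, 'n) monoid_scheme \<Rightarrow> ('a \<Rightarrow> 'b) set" where
  "mon_hom H D = {\<phi>. \<phi> \<in> carrier H \<rightarrow> carrier D
     \<and> (\<forall>x\<in>carrier H. \<forall>y\<in>carrier H. \<phi> (x \<otimes>\<^bsub>H\<^esub> y) = \<phi> x \<otimes>\<^bsub>D\<^esub> \<phi> y)
     \<and> \<phi> \<one>\<^bsub>H\<^esub> = \<one>\<^bsub>D\<^esub>}"

definition divisor_hom :: "('a, 'm) monoid_scheme \<Rightarrow> ('b, 'n) monoid_scheme \<Rightarrow> ('a \<Rightarrow> 'b) \<Rightarrow> bool" where
  "divisor_hom H D \<phi> \<longleftrightarrow> \<phi> \<in> mon_hom H D \<and>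
     (\<forall>a\<in>carrier H. \<forall>b\<in>carrier H. \<phi> a divides\<^bsub>D\<^esub> \<phi> b \<longrightarrow> a divides\<^bsub>H\<^esub> b)"

(* H is a Krull monoid: a (commutative cancellative) monoid admitting a divisor homomorphism
   into a free abelian monoid F(P); the basis P is taken inside the type 'p *)
definition Krull_monoid :: "('a, 'm) monoid_scheme \<Rightarrow> 'p itself \<Rightarrow> bool" where
  "Krull_monoid H (_ :: 'p itself) \<longleftrightarrow> comm_monoid_cancel H \<and>
     (\<exists>(P :: 'p set) \<phi>. divisor_hom H (free_ab_monoid P) \<phi>)"

definition unit_coset :: "('b, 'n) monoid_scheme \<Rightarrow> 'b \<Rightarrow> 'b set" where
  "unit_coset B x = (\<lambda>e. x \<otimes>\<^bsub>B\<^esub> e) ` Units B"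

definition transfer_hom :: "('a, 'm) monoid_scheme \<Rightarrow> ('b, 'n) monoid_scheme \<Rightarrow> ('a \<Rightarrow> 'b) \<Rightarrow> bool" where
  "transfer_hom H B \<theta> \<longleftrightarrow> \<theta> \<in> mon_hom H B
     \<and> carrier B = {\<theta> u \<otimes>\<^bsub>B\<^esub> e | u e. u \<in> carrier H \<and> e \<in> Units B}
     \<and> {u \<in> carrier H. \<theta> u \<in> Units B} = Units H
     \<and> (\<forall>u\<in>carrier H. \<forall>b\<in>carrier B. \<forall>c\<in>carrier B. \<theta> u = b \<otimes>\<^bsub>B\<^esub> c \<longrightarrow>
          (\<exists>v\<in>carrier H. \<exists>w\<in>carrier H. u = v \<otimes>\<^bsub>H\<^esub> w
             \<and> unit_coset B (\<theta> v) = unit_coset B b \<and> unit_coset B (\<theta> w) = unit_coset B c))"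

(* H is transfer Krull: there is a transfer homomorphism from H to a Krull monoid;
   the target monoid has elements in type 'b, its Krull basis lives in type 'p *)
definition transfer_Krull :: "('a, 'm) monoid_scheme \<Rightarrow> 'b itself \<Rightarrow> 'p itself \<Rightarrow> bool" where
  "transfer_Krull H (_ :: 'b itself) (_ :: 'p itself) \<longleftrightarrow>
     (\<exists>(B :: 'b monoid) \<theta>. Krull_monoid B TYPE('p) \<and> transfer_hom H B \<theta>)"

end

theory Submission
  imports Defs "HOL-Algebra.Multiplicative_Group"
begin

text \<open>If \<theta>: B(G) \<rightarrow> B is a transfer homomorphism into a Krull monoid with divisor homomorphism
  \<psi>: B \<rightarrow> F(P), then \<Phi> = \<psi> \<circ> \<theta> sends only units to 1, and whenever \<Phi>(a) divides \<Phi>(b) there is a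
  factorisation b = v w with \<Phi>(v) = \<Phi>(a). As F(P) is root closed, b^n = a^n c forces \<Phi>(a) | \<Phi>(b),
  so such a b cannot be an atom when a and c are non-units. If g h \<noteq> h g, the product-one sequence
  b = g \<cdot> g\<inverse> \<cdot> h \<cdot> k with k = (g h g\<inverse>)\<inverse> is an atom of B(G), yet in B(G)
  b^|G| = (g \<cdot> g\<inverse>)^|G| (h^|G| \<cdot> k^|G|).
  Conversely, for abelian G the inclusion B(G) \<subseteq> F(G) is a divisor homomorphism.\<close>

lemma free_ab_monoid_simps [simp]:
  "carrier (free_ab_monoid P) = {S. set_mset S \<subseteq> P}"
  "mult (free_ab_monoid P) = (+)" "one (free_ab_monoid P) = {#}"
  by (simp_all add: free_ab_monoid_def)

definition lifts_divisors :: "('a, 'm) monoid_scheme \<Rightarrow> 'p set \<Rightarrow> ('a \<Rightarrow> 'p multiset) \<Rightarrow> bool" where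
  "lifts_divisors H P \<Phi> \<longleftrightarrow> \<Phi> \<in> mon_hom H (free_ab_monoid P)
     \<and> (\<forall>u\<in>carrier H. \<Phi> u = {#} \<longrightarrow> u \<in> Units H)
     \<and> (\<forall>a\<in>carrier H. \<forall>b\<in>carrier H. \<Phi> a \<subseteq># \<Phi> b \<longrightarrow>
          (\<exists>v\<in>carrier H. \<exists>w\<in>carrier H. b = v \<otimes>\<^bsub>H\<^esub> w \<and> \<Phi> v = \<Phi> a))"

lemma mon_hom_free_ab_monoidD:
  assumes "\<Phi> \<in> mon_hom H (free_ab_monoid P)"
  shows "\<And>x. x \<in> carrier H \<Longrightarrow> set_mset (\<Phi> x) \<subseteq> P"
    and "\<And>x y. x \<in> carrier H \<Longrightarrow> y \<in> carrier H \<Longrightarrow> \<Phi> (x \<otimes>\<^bsub>H\<^esub> y) = \<Phi> x + \<Phi> y"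
    and "\<Phi> \<one>\<^bsub>H\<^esub> = {#}"
  using assms by (auto simp: mon_hom_def Pi_iff)

lemma (in monoid) mon_hom_free_ab_monoid_Units:
  assumes "\<Phi> \<in> mon_hom G (free_ab_monoid P)" and "e \<in> Units G"
  shows "\<Phi> e = {#}"
proof -
  obtain e' where "e' \<in> carrier G" "e' \<otimes> e = \<one>" using Units_l_inv_ex[OF assms(2)] by blast
  then have "\<Phi> e' + \<Phi> e = {#}"
    using mon_hom_free_ab_monoidD[OF assms(1)] Units_closed[OF assms(2)] by metis
  then show ?thesis by simp
qed

lemma (in monoid) mon_hom_free_ab_monoid_nat_pow:
  assumes "\<Phi> \<in> mon_hom G (free_ab_monoid P)" and "x \<in> carrier G"
  shows "\<Phi> (x [^] n) = repeat_mset n (\<Phi> x)"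
  by (induction n) (simp_all add: mon_hom_free_ab_monoidD[OF assms(1)] assms(2) add.commute)

lemma (in monoid) mon_hom_free_ab_monoid_unit_coset_eq:
  assumes "\<Phi> \<in> mon_hom G (free_ab_monoid P)" and "x \<in> carrier G" "y \<in> carrier G"
    and "unit_coset G x = unit_coset G y"
  shows "\<Phi> x = \<Phi> y"
proof -
  have "y \<in> unit_coset G y" unfolding unit_coset_def using assms(3) by (auto intro!: image_eqI[of _ _ \<one>])
  then obtain e where e: "e \<in> Units G" and "y = x \<otimes> e" using assms(4) unfolding unit_coset_def by auto
  then show ?thesis
    using mon_hom_free_ab_monoidD(2)[OF assms(1)] assms(2) Units_closed[OF e]
      mon_hom_free_ab_monoid_Units[OF assms(1) e] by simp
qed

lemma subseteq_mset_if_repeat_mset_eq: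
  assumes "repeat_mset n B = repeat_mset n A + C" and "0 < n"
  shows "A \<subseteq># B"
proof (rule mset_subset_eqI)
  fix x
  have "n * count A x \<le> n * count B x"
    using arg_cong[OF assms(1), of "\<lambda>M. count M x"] by simp
  then show "count A x \<le> count B x" using assms(2) by simp
qed

lemma (in comm_monoid) divisor_hom_lifts_divisors:
  assumes "divisor_hom G (free_ab_monoid P) \<phi>"
  shows "lifts_divisors G P \<phi>"
proof -
  have hom: "\<phi> \<in> mon_hom G (free_ab_monoid P)"
    and dvd: "\<And>a b. a \<in> carrier G \<Longrightarrow> b \<in> carrier G \<Longrightarrow>
      \<phi> a divides\<^bsub>free_ab_monoid P\<^esub> \<phi> b \<Longrightarrow> a divides b"
    using assms by (auto simp: divisor_hom_def)
  note \<phi> = mon_hom_free_ab_monoidD[OF hom]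
  have divides_free: "\<phi> a divides\<^bsub>free_ab_monoid P\<^esub> \<phi> b"
    if "a \<in> carrier G" "b \<in> carrier G" "\<phi> a \<subseteq># \<phi> b" for a b
  proof -
    have "set_mset (\<phi> b - \<phi> a) \<subseteq> P" using \<phi>(1)[OF that(2)] by (meson in_diffD subsetD subsetI)
    moreover have "\<phi> b = \<phi> a + (\<phi> b - \<phi> a)" using that(3) by simp
    ultimately show ?thesis unfolding factor_def by auto
  qed
  have "u \<in> Units G" if "u \<in> carrier G" "\<phi> u = {#}" for u
  proof -
    have "\<phi> u \<subseteq># \<phi> \<one>" using that(2) by simp
    then have "u divides \<one>" using dvd divides_free that(1) one_closed by blast
    then show ?thesis using that(1) Unit_eq_dividesone by blast
  qed
  moreover have "\<exists>v\<in>carrier G. \<exists>w\<in>carrier G. b = v \<otimes> w \<and> \<phi> v = \<phi> a"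
    if "a \<in> carrier G" "b \<in> carrier G" "\<phi> a \<subseteq># \<phi> b" for a b
    using dvd[OF that(1,2) divides_free[OF that]] that(1) by (auto simp: factor_def)
  ultimately show ?thesis using hom by (simp add: lifts_divisors_def)
qed

lemma transfer_hom_lifts_divisors:
  assumes "monoid B" and \<theta>: "transfer_hom H B \<theta>" and \<psi>: "lifts_divisors B P \<psi>"
  shows "lifts_divisors H P (\<psi> \<circ> \<theta>)"
proof -
  interpret B: monoid B by (rule assms(1))
  have \<theta>_hom: "\<theta> \<in> mon_hom H B"
    and \<theta>_Units: "\<And>u. u \<in> carrier H \<Longrightarrow> \<theta> u \<in> Units B \<Longrightarrow> u \<in> Units H"
    and \<theta>_split: "\<And>u b c. u \<in> carrier H \<Longrightarrow> b \<in> carrier B \<Longrightarrow> c \<in> carrier B \<Longrightarrow>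
      \<theta> u = b \<otimes>\<^bsub>B\<^esub> c \<Longrightarrow> \<exists>v\<in>carrier H. \<exists>w\<in>carrier H. u = v \<otimes>\<^bsub>H\<^esub> w
        \<and> unit_coset B (\<theta> v) = unit_coset B b \<and> unit_coset B (\<theta> w) = unit_coset B c"
    using \<theta> unfolding transfer_hom_def by blast+
  have \<psi>_hom: "\<psi> \<in> mon_hom B (free_ab_monoid P)"
    and \<psi>_Units: "\<And>x. x \<in> carrier B \<Longrightarrow> \<psi> x = {#} \<Longrightarrow> x \<in> Units B"
    and \<psi>_lift: "\<And>a b. a \<in> carrier B \<Longrightarrow> b \<in> carrier B \<Longrightarrow> \<psi> a \<subseteq># \<psi> b \<Longrightarrow>
      \<exists>v\<in>carrier B. \<exists>w\<in>carrier B. b = v \<otimes>\<^bsub>B\<^esub> w \<and> \<psi> v = \<psi> a"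
    using \<psi> unfolding lifts_divisors_def by blast+
  have \<theta>_closed: "\<theta> u \<in> carrier B" if "u \<in> carrier H" for u
    using \<theta>_hom that by (auto simp: mon_hom_def)
  have "\<psi> \<circ> \<theta> \<in> mon_hom H (free_ab_monoid P)"
    using \<theta>_hom \<psi>_hom by (auto simp: mon_hom_def Pi_iff)
  moreover have "u \<in> Units H" if "u \<in> carrier H" "(\<psi> \<circ> \<theta>) u = {#}" for u
    using that \<theta>_closed \<psi>_Units \<theta>_Units by simp
  moreover have "\<exists>v\<in>carrier H. \<exists>w\<in>carrier H. b = v \<otimes>\<^bsub>H\<^esub> w \<and> (\<psi> \<circ> \<theta>) v = (\<psi> \<circ> \<theta>) a"
    if a: "a \<in> carrier H" and b: "b \<in> carrier H" and sub: "(\<psi> \<circ> \<theta>) a \<subseteq># (\<psi> \<circ> \<theta>) b" for a b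
  proof -
    obtain v' w' where v': "v' \<in> carrier B" and w': "w' \<in> carrier B"
      and split': "\<theta> b = v' \<otimes>\<^bsub>B\<^esub> w'" and \<psi>v': "\<psi> v' = \<psi> (\<theta> a)"
      using \<psi>_lift[OF \<theta>_closed[OF a] \<theta>_closed[OF b]] sub by auto
    obtain v w where v: "v \<in> carrier H" and w: "w \<in> carrier H" and "b = v \<otimes>\<^bsub>H\<^esub> w"
      and "unit_coset B (\<theta> v) = unit_coset B v'"
      using \<theta>_split[OF b v' w' split'] by blast
    then have "\<psi> v' = \<psi> (\<theta> v)"
      using B.mon_hom_free_ab_monoid_unit_coset_eq[OF \<psi>_hom \<theta>_closed[OF v] v'] by simp
    then show ?thesis using v w \<open>b = v \<otimes>\<^bsub>H\<^esub> w\<close> \<psi>v' by auto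
  qed
  ultimately show ?thesis unfolding lifts_divisors_def by blast
qed

lemma (in comm_monoid) lifts_divisors_power_split:
  assumes \<Phi>: "lifts_divisors G P \<Phi>"
    and carr: "a \<in> carrier G" "b \<in> carrier G" "c \<in> carrier G"
    and pow: "b [^] (n::nat) = a [^] n \<otimes> c" and "0 < n"
    and nonunits: "a \<notin> Units G" "c \<notin> Units G"
  shows "\<exists>v\<in>carrier G. \<exists>w\<in>carrier G. b = v \<otimes> w \<and> v \<notin> Units G \<and> w \<notin> Units G"
proof -
  have hom: "\<Phi> \<in> mon_hom G (free_ab_monoid P)"
    and \<Phi>_Units: "\<And>u. u \<in> carrier G \<Longrightarrow> \<Phi> u = {#} \<Longrightarrow> u \<in> Units G"
    and lift: "\<And>a b. a \<in> carrier G \<Longrightarrow> b \<in> carrier G \<Longrightarrow> \<Phi> a \<subseteq># \<Phi> b \<Longrightarrow>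
      \<exists>v\<in>carrier G. \<exists>w\<in>carrier G. b = v \<otimes> w \<and> \<Phi> v = \<Phi> a"
    using \<Phi> unfolding lifts_divisors_def by blast+
  note \<Phi>_simps = mon_hom_free_ab_monoidD[OF hom]
  have pow_eq: "repeat_mset n (\<Phi> b) = repeat_mset n (\<Phi> a) + \<Phi> c"
    using arg_cong[OF pow, of \<Phi>] carr
    by (simp add: \<Phi>_simps mon_hom_free_ab_monoid_nat_pow[OF hom])
  then have "\<Phi> a \<subseteq># \<Phi> b" using \<open>0 < n\<close> by (rule subseteq_mset_if_repeat_mset_eq)
  then obtain v w where v: "v \<in> carrier G" and w: "w \<in> carrier G" and "b = v \<otimes> w"
    and \<Phi>v: "\<Phi> v = \<Phi> a"
    using lift carr by blast
  have "v \<notin> Units G"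
    using \<Phi>v mon_hom_free_ab_monoid_Units[OF hom] \<Phi>_Units carr(1) nonunits(1) by metis
  moreover have "w \<notin> Units G"
  proof
    assume "w \<in> Units G"
    then have "\<Phi> b = \<Phi> a"
      using \<open>b = v \<otimes> w\<close> \<Phi>v v w \<Phi>_simps(2) mon_hom_free_ab_monoid_Units[OF hom] by simp
    then have "\<Phi> c = {#}" using pow_eq by simp
    then show False using \<Phi>_Units carr(3) nonunits(2) by blast
  qed
  ultimately show ?thesis using v w \<open>b = v \<otimes> w\<close> by blast
qed

lemma transfer_hom_id:
  fixes H (structure)
  assumes "monoid H"
  shows "transfer_hom H H (\<lambda>x. x)"
proof -
  interpret monoid H by (rule assms)
  have "carrier H = {u \<otimes> e | u e. u \<in> carrier H \<and> e \<in> Units H}"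
    by (auto simp: Units_closed) (metis Units_one_closed r_one)
  then show ?thesis
    unfolding transfer_hom_def mon_hom_def Units_def by auto
qed

lemma transfer_Krull_if_Krull_monoid:
  fixes H :: "'a monoid"
  assumes "Krull_monoid H TYPE('p)"
  shows "transfer_Krull H TYPE('a) TYPE('p)"
proof -
  have "monoid H"
    using assms by (simp add: Krull_monoid_def comm_monoid_cancel_def monoid_cancel_def)
  then show ?thesis
    unfolding transfer_Krull_def using assms transfer_hom_id by blast
qed

lemma lifts_divisors_if_transfer_Krull:
  assumes "transfer_Krull H TYPE('b) TYPE('q)"
  obtains P :: "'q set" and \<Phi> where "lifts_divisors H P \<Phi>"
proof -
  obtain B :: "'b monoid" and \<theta> and P :: "'q set" and \<psi>
    where B: "comm_monoid_cancel B" and \<theta>: "transfer_hom H B \<theta>"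
      and \<psi>: "divisor_hom B (free_ab_monoid P) \<psi>"
    using assms unfolding transfer_Krull_def Krull_monoid_def by blast
  interpret B: comm_monoid_cancel B by (rule B)
  have "lifts_divisors B P \<psi>" using \<psi> by (rule B.divisor_hom_lifts_divisors)
  then show ?thesis using that transfer_hom_lifts_divisors[OF B.monoid_axioms \<theta>] by blast
qed

definition list_prod :: "('a, 'b) monoid_scheme \<Rightarrow> 'a list \<Rightarrow> 'a" where
  "list_prod G xs = foldr (\<lambda>x y. x \<otimes>\<^bsub>G\<^esub> y) xs \<one>\<^bsub>G\<^esub>"

lemma list_prod_simps [simp]:
  "list_prod G [] = \<one>\<^bsub>G\<^esub>" "list_prod G (x # xs) = x \<otimes>\<^bsub>G\<^esub> list_prod G xs"
  by (simp_all add: list_prod_def)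

lemma (in monoid) list_prod_closed: "set xs \<subseteq> carrier G \<Longrightarrow> list_prod G xs \<in> carrier G"
  by (induction xs) auto

lemma (in monoid) list_prod_append:
  "set xs \<subseteq> carrier G \<Longrightarrow> set ys \<subseteq> carrier G \<Longrightarrow>
    list_prod G (xs @ ys) = list_prod G xs \<otimes> list_prod G ys"
  by (induction xs) (auto simp: list_prod_closed m_assoc)

lemma (in monoid) list_prod_replicate: "x \<in> carrier G \<Longrightarrow> list_prod G (replicate n x) = x [^] n"
  by (induction n) (simp_all add: nat_pow_Suc2[symmetric])

lemma (in comm_monoid) list_prod_mset_eq:
  "mset xs = mset ys \<Longrightarrow> set xs \<subseteq> carrier G \<Longrightarrow> list_prod G xs = list_prod G ys"
proof (induction xs arbitrary: ys)
  case (Cons x xs)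
  then have "x \<in> set ys" by (metis list.set_intros(1) set_mset_mset)
  then obtain ys1 ys2 where ys: "ys = ys1 @ x # ys2" by (meson split_list)
  have carr: "set ys \<subseteq> carrier G" using Cons.prems by (metis set_mset_mset)
  have "list_prod G ys = x \<otimes> list_prod G (ys1 @ ys2)"
    using carr by (simp add: ys list_prod_append list_prod_closed m_lcomm)
  moreover have "list_prod G xs = list_prod G (ys1 @ ys2)" using Cons ys by simp
  ultimately show ?case by simp
qed simp

lemma BG_carrier_iff:
  "S \<in> carrier (BG G) \<longleftrightarrow>
    set_mset S \<subseteq> carrier G \<and> (\<exists>xs. mset xs = S \<and> list_prod G xs = \<one>\<^bsub>G\<^esub>)"
  by (auto simp: BG_def seq_prods_def list_prod_def) metis

lemma BG_simps [simp]: "mult (BG G) = (+)" "one (BG G) = {#}"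
  by (simp_all add: BG_def)

context group
begin

lemma BG_add_closed:
  assumes "S \<in> carrier (BG G)" and "T \<in> carrier (BG G)"
  shows "S + T \<in> carrier (BG G)"
proof -
  obtain xs ys where "mset xs = S" "list_prod G xs = \<one>" "mset ys = T" "list_prod G ys = \<one>"
    using assms unfolding BG_carrier_iff by blast
  then show ?thesis
    using assms unfolding BG_carrier_iff
    by (auto intro!: exI[of _ "xs @ ys"] simp: list_prod_append)
qed

lemma BG_empty: "{#} \<in> carrier (BG G)"
  by (auto simp: BG_carrier_iff intro: exI[of _ "[]"])

lemma comm_monoid_cancel_BG: "comm_monoid_cancel (BG G)"
  by (rule comm_monoid_cancelI, rule comm_monoidI) (auto simp: BG_add_closed BG_empty)

lemma Units_BG: "Units (BG G) = {{#}}"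
  by (auto simp: Units_def BG_empty)

lemma BG_nat_pow: "S [^]\<^bsub>BG G\<^esub> n = repeat_mset n S"
  by (induction n) (simp_all add: nat_pow_def add.commute)

lemma BG_singleton_iff: "{#x#} \<in> carrier (BG G) \<longleftrightarrow> x = \<one>"
  by (auto simp: BG_carrier_iff intro: exI[of _ "[\<one>]"])

lemma BG_pair_iff:
  "{#x, y#} \<in> carrier (BG G) \<longleftrightarrow> x \<in> carrier G \<and> y \<in> carrier G \<and> x \<otimes> y = \<one>"
proof
  assume "{#x, y#} \<in> carrier (BG G)"
  then obtain xs where carr: "x \<in> carrier G" "y \<in> carrier G"
    and xs: "mset xs = {#x, y#}" "list_prod G xs = \<one>"
    unfolding BG_carrier_iff by auto
  have "xs = [x, y] \<or> xs = [y, x]"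
  proof -
    obtain p q where "xs = [p, q]"
      using arg_cong[OF xs(1), of size] by (cases xs rule: remdups_adj.cases) auto
    with xs(1) show ?thesis by (auto simp: add_eq_conv_ex)
  qed
  then show "x \<in> carrier G \<and> y \<in> carrier G \<and> x \<otimes> y = \<one>"
    using xs(2) carr inv_comm by auto
next
  assume "x \<in> carrier G \<and> y \<in> carrier G \<and> x \<otimes> y = \<one>"
  then show "{#x, y#} \<in> carrier (BG G)"
    by (auto simp: BG_carrier_iff intro!: exI[of _ "[x, y]"])
qed

end

lemma (in comm_group) BG_summand_closed:
  assumes S: "S \<in> carrier (BG G)" and ST: "S + T \<in> carrier (BG G)" and T: "set_mset T \<subseteq> carrier G"
  shows "T \<in> carrier (BG G)"
proof -
  obtain xs where xs: "mset xs = S" "list_prod G xs = \<one>" and "set_mset S \<subseteq> carrier G"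
    using S unfolding BG_carrier_iff by blast
  obtain zs where zs: "mset zs = S + T" "list_prod G zs = \<one>"
    using ST unfolding BG_carrier_iff by blast
  obtain ys where ys: "mset ys = T" using ex_mset by blast
  have carr: "set xs \<subseteq> carrier G" "set ys \<subseteq> carrier G"
    using xs ys T \<open>set_mset S \<subseteq> carrier G\<close> by (metis set_mset_mset)+
  have "list_prod G xs \<otimes> list_prod G ys = list_prod G zs"
    using list_prod_mset_eq[of "xs @ ys" zs] xs ys zs carr by (simp add: list_prod_append)
  then have "list_prod G ys = \<one>" using xs zs carr by (simp add: list_prod_closed)
  then show ?thesis unfolding BG_carrier_iff using ys T by blast
qed

lemma BG_Krull_monoid_if_comm_group:
  fixes G :: "('a, 'g) monoid_scheme"
  assumes "comm_group G"
  shows "Krull_monoid (BG G) TYPE('a)"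
proof -
  interpret comm_group G by (rule assms)
  have "(\<lambda>S. S) \<in> mon_hom (BG G) (free_ab_monoid (carrier G))"
    unfolding mon_hom_def by (simp add: BG_carrier_iff Pi_iff BG_empty)
  moreover have "S divides\<^bsub>BG G\<^esub> T"
    if S: "S \<in> carrier (BG G)" and T: "T \<in> carrier (BG G)"
      and dvd: "S divides\<^bsub>free_ab_monoid (carrier G)\<^esub> T" for S T
  proof -
    obtain R where R: "set_mset R \<subseteq> carrier G" and T_eq: "T = S + R"
      using dividesD[OF dvd] by auto
    have "R \<in> carrier (BG G)" using BG_summand_closed[OF S _ R] T T_eq by blast
    then show ?thesis using T_eq by (intro dividesI) simp_all
  qed
  ultimately have "divisor_hom (BG G) (free_ab_monoid (carrier G)) (\<lambda>S. S)"
    unfolding divisor_hom_def by blast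
  then show ?thesis unfolding Krull_monoid_def using comm_monoid_cancel_BG by blast
qed

lemma size_two_mset:
  assumes "size M = 2"
  obtains x y where "M = {#x, y#}"
proof -
  obtain x N where "M = add_mset x N" using assms size_eq_Suc_imp_eq_union[of M 1] by auto
  moreover obtain y where "N = {#y#}"
    using assms size_1_singleton_mset[of N] \<open>M = add_mset x N\<close> by auto
  ultimately show ?thesis using that by blast
qed

context group
begin

lemma commute_if_commutator_one:
  assumes g: "g \<in> carrier G" and h: "h \<in> carrier G" and "h \<otimes> (g \<otimes> inv h \<otimes> inv g) = \<one>"
  shows "g \<otimes> h = h \<otimes> g"
proof -
  have "h \<otimes> g \<otimes> inv h \<otimes> inv g = \<one>" using assms by (simp add: m_assoc)
  then have "h \<otimes> g \<otimes> inv h = g"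
    using inv_solve_right'[of "\<one>" "h \<otimes> g \<otimes> inv h" g] g h by simp
  then show ?thesis
    using inv_solve_right'[of g "h \<otimes> g" h] g h by simp
qed

lemma BG_commutator_sequence_atom:
  assumes g: "g \<in> carrier G" and h: "h \<in> carrier G" and nc: "g \<otimes> h \<noteq> h \<otimes> g"
    and V: "V \<in> carrier (BG G)" and W: "W \<in> carrier (BG G)"
    and split: "V + W = {#g, inv g, h, g \<otimes> inv h \<otimes> inv g#}"
  shows "V = {#} \<or> W = {#}"
proof (rule ccontr)
  assume nonempty: "\<not> (V = {#} \<or> W = {#})"
  define k where "k = g \<otimes> inv h \<otimes> inv g"
  have "g \<noteq> \<one>" "h \<noteq> \<one>" using nc g h by auto
  moreover have "k \<noteq> \<one>"
  proof
    assume "k = \<one>"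
    then have "g \<otimes> inv h = \<one> \<otimes> g"
      using inv_solve_right'[of "\<one>" "g \<otimes> inv h" g] g h by (simp add: k_def)
    then have "g \<otimes> inv h = g \<otimes> \<one>" using g by simp
    then have "inv h = \<one>" using g h l_cancel by blast
    then show False using \<open>h \<noteq> \<one>\<close> h by simp
  qed
  moreover have "inv g \<noteq> \<one>" using \<open>g \<noteq> \<one>\<close> g by simp
  ultimately have one_notin: "\<one> \<notin># V + W" unfolding split k_def[symmetric] by auto
  have size_ge_2: "2 \<le> size X" if "X \<in> carrier (BG G)" "X \<noteq> {#}" "X \<subseteq># V + W" for X
  proof (rule ccontr)
    assume "\<not> 2 \<le> size X"
    then have "size X = 1" using that(2) by (cases "size X") auto
    then obtain x where "X = {#x#}" using size_1_singleton_mset by blast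
    then show False using that one_notin BG_singleton_iff by auto
  qed
  have "size V + size W = 4" using arg_cong[OF split, of size] by simp
  moreover have "2 \<le> size V" "2 \<le> size W"
    using size_ge_2[OF V] size_ge_2[OF W] nonempty by simp_all
  ultimately have sizes: "size V = 2" "size W = 2" by linarith+
  have half: False if XY: "X + Y = {#g, inv g, h, k#}" and X: "X \<in> carrier (BG G)"
    and Y: "Y \<in> carrier (BG G)" and gX: "g \<in># X" and size_X: "size X = 2" for X Y
  proof -
    obtain x y where "X = {#x, y#}" using size_two_mset[OF size_X] .
    then obtain z where X_eq: "X = {#g, z#}" using gX by (cases "x = g") (auto simp: add_mset_commute)
    then have "z \<in> carrier G" "g \<otimes> z = \<one>" using X BG_pair_iff by blast+
    then have "z = inv g" using inv_equality[OF _ g] inv_comm[OF _ g] by metis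
    then have "Y = {#h, k#}" using XY X_eq by simp
    then have "h \<otimes> (g \<otimes> inv h \<otimes> inv g) = \<one>" using Y BG_pair_iff unfolding k_def by blast
    then show False using nc commute_if_commutator_one[OF g h] by blast
  qed
  have "g \<in># V + W" by (simp add: split)
  show False
  proof (cases "g \<in># V")
    case True
    moreover have "V + W = {#g, inv g, h, k#}" using split by (simp add: k_def)
    ultimately show False using half[of V W] sizes V W by blast
  next
    case False
    then have "g \<in># W" using \<open>g \<in># V + W\<close> by simp
    moreover have "W + V = {#g, inv g, h, k#}" using split by (simp add: k_def add.commute)
    ultimately show False using half[of W V] sizes V W by blast
  qed
qed

end

lemma (in group) comm_group_if_lifts_divisors:
  assumes fin: "finite (carrier G)" and \<Phi>: "lifts_divisors (BG G) P \<Phi>"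
  shows "comm_group G"
proof (rule group_comm_groupI)
  interpret BG: comm_monoid_cancel "BG G" by (rule comm_monoid_cancel_BG)
  fix g h assume g: "g \<in> carrier G" and h: "h \<in> carrier G"
  show "g \<otimes> h = h \<otimes> g"
  proof (rule ccontr)
    assume nc: "g \<otimes> h \<noteq> h \<otimes> g"
    define k where "k = g \<otimes> inv h \<otimes> inv g"
    define n where "n = order G"
    define A where "A = {#g, inv g#}"
    define C where "C = repeat_mset n {#h, k#}"
    have k: "k \<in> carrier G" and k_inv: "k = inv (g \<otimes> h \<otimes> inv g)"
      using g h by (simp_all add: k_def inv_mult_group m_assoc)
    have "0 < n" using fin order_gt_0_iff_finite by (simp add: n_def)
    have A: "A \<in> carrier (BG G)" using g by (simp add: A_def BG_pair_iff)
    have "list_prod G [g, h, inv g, k] = g \<otimes> h \<otimes> inv g \<otimes> k"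
      using g h k by (simp add: m_assoc)
    also have "\<dots> = \<one>" using g h by (simp add: k_inv)
    finally have B: "A + {#h, k#} \<in> carrier (BG G)"
      using g h k unfolding BG_carrier_iff A_def by (auto intro!: exI[of _ "[g, h, inv g, k]"])
    have "list_prod G (replicate n h @ replicate n k) = \<one>"
      using h k by (subst list_prod_append) (auto simp: list_prod_replicate n_def pow_order_eq_1)
    then have C: "C \<in> carrier (BG G)"
      using h k unfolding BG_carrier_iff C_def by (auto intro!: exI[of _ "replicate n h @ replicate n k"])
    have "(A + {#h, k#}) [^]\<^bsub>BG G\<^esub> n = A [^]\<^bsub>BG G\<^esub> n \<otimes>\<^bsub>BG G\<^esub> C"
      by (simp add: BG_nat_pow C_def)
    moreover have "A \<notin> Units (BG G)" "C \<notin> Units (BG G)"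
      using \<open>0 < n\<close> by (simp_all add: Units_BG A_def C_def repeat_mset_eq_empty_iff)
    ultimately obtain V W where "V \<in> carrier (BG G)" "W \<in> carrier (BG G)" "A + {#h, k#} = V + W"
      "V \<noteq> {#}" "W \<noteq> {#}"
      using BG.lifts_divisors_power_split[OF \<Phi> A B C _ \<open>0 < n\<close>] by (auto simp: Units_BG)
    moreover have "A + {#h, k#} = {#g, inv g, h, g \<otimes> inv h \<otimes> inv g#}"
      by (simp add: A_def k_def add_mset_commute)
    ultimately show False using BG_commutator_sequence_atom[OF g h nc] by metis
  qed
qed

lemma (in group) comm_group_if_transfer_Krull:
  assumes "finite (carrier G)" and "transfer_Krull (BG G) TYPE('c) TYPE('r)"
  shows "comm_group G"
  using lifts_divisors_if_transfer_Krull[OF assms(2)] comm_group_if_lifts_divisors[OF assms(1)]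
  by metis

lemma (in group) comm_group_if_Krull_monoid:
  assumes "finite (carrier G)" and "Krull_monoid (BG G) TYPE('p)"
  shows "comm_group G"
  using comm_group_if_transfer_Krull[OF assms(1) transfer_Krull_if_Krull_monoid[OF assms(2)]] .

theorem proposition3p4:
  fixes G :: "('a, 'g) monoid_scheme"
  assumes "group G" and "finite (carrier G)"
  shows "(comm_group G \<longleftrightarrow> Krull_monoid (BG G) TYPE('a))
       \<and> (comm_group G \<longleftrightarrow> transfer_Krull (BG G) TYPE('a multiset) TYPE('a))
       \<and> (Krull_monoid (BG G) TYPE('p) \<longrightarrow> comm_group G)
       \<and> (transfer_Krull (BG G) TYPE('b) TYPE('q) \<longrightarrow> comm_group G)"
proof -
  interpret group G by (rule assms(1))
  have "comm_group G \<Longrightarrow> Krull_monoid (BG G) TYPE('a)"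
    by (rule BG_Krull_monoid_if_comm_group)
  moreover have "comm_group G \<Longrightarrow> transfer_Krull (BG G) TYPE('a multiset) TYPE('a)"
    by (rule transfer_Krull_if_Krull_monoid[OF BG_Krull_monoid_if_comm_group])
  moreover have "Krull_monoid (BG G) TYPE('a) \<Longrightarrow> comm_group G"
    by (rule comm_group_if_Krull_monoid[OF assms(2)])
  moreover have "Krull_monoid (BG G) TYPE('p) \<Longrightarrow> comm_group G"
    by (rule comm_group_if_Krull_monoid[OF assms(2)])
  moreover have "transfer_Krull (BG G) TYPE('a multiset) TYPE('a) \<Longrightarrow> comm_group G"
    by (rule comm_group_if_transfer_Krull[OF assms(2)])
  moreover have "transfer_Krull (BG G) TYPE('b) TYPE('q) \<Longrightarrow> comm_group G"
    by (rule comm_group_if_transfer_Krull[OF assms(2)])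
  ultimately show ?thesis by blast
qed

end
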